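(* Let $\mathcal{H}$ be a tree-to-tree Hennie machine (THM) with input ranked alphabet $\Sigma$ and output ranked alphabet $\Gamma$. Then $[\![\mathcal{H}]\!]$ has linear size-to-height increase: there exist constants $c,d$ such that for every $t\in T_\Sigma$ in the domain of $[\![\mathcal{H}]\!]$, $\mathrm{height}([\![\mathcal{H}]\!](t))\le c\,|t|+d$.
   Context: A ranked alphabet is a finite set $\Sigma$ with a map $\mathrm{rank}:\Sigma\to\mathbb{N}$; $\max\mathrm{rank}(\Sigma)$ is the maximal rank. A tree over $\Sigma$ is a finite ordered tree with nodes labeled in $\Sigma$ such that a node labeled $\sigma$ has exactly $\mathrm{rank}(\sigma)$ children; nodes are words over positive integers: the root is $\varepsilon$, the $i$-th child of $u$ is $ui$, and $u{\uparrow}$ denotes the parent of $u\neq\varepsilon$. $T_\Sigma$ is the set of trees over $\Sigma$; for a set $Y$ disjoint from $\Sigma$, $T_\Sigma[Y]$ is the set of trees over $\Sigma\cup Y$ where elements of $Y$ have rank $0$. $|t|$ is the number of nodes of $t$ and $\mathrm{height}(t)$ the maximal number of edges on a root-to-leaf path. An unrestricted tree-to-tree Hennie machine (uTHM) is a tuple $\mathcal{H}=(Q,M,\top,\Sigma,\Gamma,q_{init},\delta)$ where $Q$ is a finite set of states, $M$ a finite set of memory symbols, $\top\in M$, $\Sigma,\Gamma$ ranked alphabets (input/output), $q_{init}\in Q$, and $\delta:Q\times\Sigma\times M\rightharpoonup T_\Gamma[Q\times M\times D]$ is a partial function, $D=\{\uparrow\}\cup\{1,\dots,\max\mathrm{rank}(\Sigma)\}$,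 such that every leaf label $(q',m',d)$ of $\delta(q,\sigma,m)$ has $d\in\{\uparrow,1,\dots,\mathrm{rank}(\sigma)\}$. On an input $t\in T_\Sigma$, a configuration is a triple $(u,q,\mu)$ with $u$ a node of $t$, $q\in Q$, $\mu$ a map from nodes of $t$ to $M$; the initial configuration is $(\varepsilon,q_{init},\mu_\top)$ with $\mu_\top$ constantly $\top$. For a configuration $(u,q,\mu)$ and $(q',m',d)\in Q\times M\times D$, the successor is $(ud,q',\mu')$ where $\mu'(u)=m'$, $\mu'=\mu$ elsewhere, and $ud$ is the parent of $u$ if $d=\uparrow$ and the $d$-th child otherwise (undefined if that node does not exist). The step of a configuration $(u,q,\mu)$ is the tree obtained from $\delta(q,\mathrm{lab}_t(u),\mu(u))$ by replacing every leaf $(q',m',d)$ by the corresponding successor configuration (undefined if $\delta$ or a successor is undefined). Starting from the initial configuration and repeatedly replacing configuration-labeled leaves by their steps is a confluent rewriting; $[\![\mathcal{H}]\!](t)$ is the unique tree of $T_\Gamma$ so reached, if it exists, and is undefined otherwise. A branch-outputting run on $t$ is a sequence of configurations $C_0,\dots,C_n$ with $C_0$ initial and each $C_{i+1}$ a leaf label of the step of $C_i$. Its number of visits at a set $S$ of nodes is the number of $i$ such that the position of $C_i$ lies in $S$. $\mathcal{H}$ is a tree-to-tree Hennie machine (THM) if there is $N$ such that for every $t\in T_\Sigma$, every node $u$ of $t$ and every branch-outputting run on $t$, the number of visits at $\{u\}$ is at most $N$. *)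

theory Defs
  imports Main
begin

(* Finite ordered ranked trees; a node is a list of positive integers (1-based child indices). *)
datatype 'a rtree = Node 'a "'a rtree list"

fun root_label :: "'a rtree \<Rightarrow> 'a" where
  "root_label (Node a ts) = a"

fun children :: "'a rtree \<Rightarrow> 'a rtree list" where
  "children (Node a ts) = ts"

fun subtree :: "'a rtree \<Rightarrow> nat list \<Rightarrow> 'a rtree option" where
  "subtree t [] = Some t"
| "subtree (Node a ts) (i # u) =
     (if 1 \<le> i \<and> i \<le> length ts then subtree (ts ! (i - 1)) u else None)"

definition positions :: "'a rtree \<Rightarrow> nat list set" where
  "positions t = {u. subtree t u \<noteq> None}"

definition lab :: "'a rtree \<Rightarrow> nat list \<Rightarrow> 'a" where
  "lab t u = root_label (the (subtree t u))"

fun tsize :: "'a rtree \<Rightarrow> nat" where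
  "tsize (Node a ts) = 1 + sum_list (map tsize ts)"

fun height :: "'a rtree \<Rightarrow> nat" where
  "height (Node a ts) = (if ts = [] then 0 else Suc (Max (set (map height ts))))"

fun wf_tree :: "('a \<Rightarrow> nat) \<Rightarrow> 'a set \<Rightarrow> 'a rtree \<Rightarrow> bool" where
  "wf_tree rk A (Node a ts) = (a \<in> A \<and> length ts = rk a \<and> (\<forall>s\<in>set ts. wf_tree rk A s))"

datatype dir = Up | Down nat

(* a (u)THM  (Q, M, top, Sigma, Gamma, q_init, delta); ranked alphabets given by carrier + rank *)
record ('q, 'm, 's, 'g) hennie =
  Qs :: "'q set"
  Ms :: "'m set"
  topm :: 'm
  Sig :: "'s set"
  rkS :: "'s \<Rightarrow> nat"
  Gam :: "'g set"
  rkG :: "'g \<Rightarrow> nat"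
  qinit :: 'q
  delta :: "'q \<Rightarrow> 's \<Rightarrow> 'm \<Rightarrow> ('g + ('q \<times> 'm \<times> dir)) rtree option"

(* ranks in T_Gamma[Q x M x D]: elements of Q x M x D have rank 0 *)
definition rk_ext :: "('g \<Rightarrow> nat) \<Rightarrow> ('g + 'x) \<Rightarrow> nat" where
  "rk_ext rk x = (case x of Inl g \<Rightarrow> rk g | Inr _ \<Rightarrow> 0)"

fun labels :: "'a rtree \<Rightarrow> 'a set" where
  "labels (Node a ts) = insert a (\<Union>s\<in>set ts. labels s)"

definition maxrank :: "('s \<Rightarrow> nat) \<Rightarrow> 's set \<Rightarrow> nat" where
  "maxrank rk A = Max (rk ` A)"

definition dir_ok :: "nat \<Rightarrow> dir \<Rightarrow> bool" where
  "dir_ok r d = (case d of Up \<Rightarrow> True | Down k \<Rightarrow> 1 \<le> k \<and> k \<le> r)"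

definition uTHM :: "('q, 'm, 's, 'g, 'z) hennie_scheme \<Rightarrow> bool" where
  "uTHM H \<longleftrightarrow> finite (Qs H) \<and> finite (Ms H) \<and> topm H \<in> Ms H
     \<and> finite (Sig H) \<and> finite (Gam H) \<and> qinit H \<in> Qs H
     \<and> (\<forall>q \<sigma> m s. delta H q \<sigma> m = Some s \<longrightarrow>
          q \<in> Qs H \<and> \<sigma> \<in> Sig H \<and> m \<in> Ms H
          \<and> wf_tree (rk_ext (rkG H)) (Inl ` Gam H \<union> Inr ` (Qs H \<times> Ms H \<times> {Up} \<union> Qs H \<times> Ms H \<times> Down ` {1..maxrank (rkS H) (Sig H)})) s
          \<and> (\<forall>q' m' d. Inr (q', m', d) \<in> labels s \<longrightarrow> dir_ok (rkS H \<sigma>) d))"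

type_synonym ('q, 'm) conf = "nat list \<times> 'q \<times> (nat list \<Rightarrow> 'm)"

definition init_conf :: "('q, 'm, 's, 'g, 'z) hennie_scheme \<Rightarrow> ('q, 'm) conf" where
  "init_conf H = ([], qinit H, (\<lambda>_. topm H))"

fun succ_conf :: "'s rtree \<Rightarrow> ('q, 'm) conf \<Rightarrow> ('q \<times> 'm \<times> dir) \<Rightarrow> ('q, 'm) conf option" where
  "succ_conf t (u, q, \<mu>) (q', m', Up) =
     (if u = [] then None else Some (butlast u, q', \<mu>(u := m')))"
| "succ_conf t (u, q, \<mu>) (q', m', Down k) =
     (if u @ [k] \<in> positions t then Some (u @ [k], q', \<mu>(u := m')) else None)"

definition step :: "('q, 'm, 's, 'g, 'z) hennie_scheme \<Rightarrow> 's rtree \<Rightarrow> ('q, 'm) conf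
                     \<Rightarrow> ('g + ('q, 'm) conf) rtree option" where
  "step H t C = (case C of (u, q, \<mu>) \<Rightarrow>
     (case delta H q (lab t u) (\<mu> u) of
        None \<Rightarrow> None
      | Some s \<Rightarrow>
          (if \<forall>x. Inr x \<in> labels s \<longrightarrow> succ_conf t C x \<noteq> None
           then Some (map_rtree (map_sum id (\<lambda>x. the (succ_conf t C x))) s)
           else None)))"

(* the (finite) result of the confluent rewriting starting from a configuration / a partial tree *)
inductive evalC :: "('q, 'm, 's, 'g, 'z) hennie_scheme \<Rightarrow> 's rtree \<Rightarrow> ('q, 'm) conf \<Rightarrow> 'g rtree \<Rightarrow> bool"
  and evalT :: "('q, 'm, 's, 'g, 'z) hennie_scheme \<Rightarrow> 's rtree \<Rightarrow> ('g + ('q, 'm) conf) rtree \<Rightarrow> 'g rtree \<Rightarrow> bool"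
  for H t where
  "step H t C = Some s \<Longrightarrow> evalT H t s r \<Longrightarrow> evalC H t C r"
| "evalC H t C r \<Longrightarrow> evalT H t (Node (Inr C) []) r"
| "list_all2 (evalT H t) ss rs \<Longrightarrow> evalT H t (Node (Inl g) ss) (Node g rs)"

definition in_dom :: "('q, 'm, 's, 'g, 'z) hennie_scheme \<Rightarrow> 's rtree \<Rightarrow> bool" where
  "in_dom H t \<longleftrightarrow> (\<exists>r. evalC H t (init_conf H) r)"

definition sem :: "('q, 'm, 's, 'g, 'z) hennie_scheme \<Rightarrow> 's rtree \<Rightarrow> 'g rtree" where
  "sem H t = (THE r. evalC H t (init_conf H) r)"

definition bo_run :: "('q, 'm, 's, 'g, 'z) hennie_scheme \<Rightarrow> 's rtree \<Rightarrow> ('q, 'm) conf list \<Rightarrow> bool" where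
  "bo_run H t cs \<longleftrightarrow> cs \<noteq> [] \<and> cs ! 0 = init_conf H
     \<and> (\<forall>i. Suc i < length cs \<longrightarrow>
           (\<exists>s. step H t (cs ! i) = Some s \<and> Inr (cs ! Suc i) \<in> labels s))"

definition visits :: "('q, 'm) conf list \<Rightarrow> nat list set \<Rightarrow> nat" where
  "visits cs S = card {i. i < length cs \<and> fst (cs ! i) \<in> S}"

definition THM :: "('q, 'm, 's, 'g, 'z) hennie_scheme \<Rightarrow> bool" where
  "THM H \<longleftrightarrow> uTHM H \<and>
     (\<exists>N. \<forall>t u cs. wf_tree (rkS H) (Sig H) t \<longrightarrow> u \<in> positions t \<longrightarrow> bo_run H t cs
            \<longrightarrow> visits cs {u} \<le> N)"

end

theory Submission
  imports Defs
begin

(* Let K bound the heights of the right-hand sides of delta. Following a longest branch of the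
   output from the root, each step of the rewriting contributes at most K levels, and the
   configurations that produce the branch form a branch-outputting run; hence the output height
   is at most K times the length of some branch-outputting run. Such a run visits each of the
   |t| nodes at most N times, so its length is at most N |t|. *)

lemma height_map_rtree [simp]: "height (map_rtree f s) = height s"
proof (induction s)
  case (Node a ts)
  then have "map (height \<circ> map_rtree f) ts = map height ts"
    by (intro map_cong) auto
  then show ?case by simp
qed

lemma labels_map_rtree [simp]: "labels (map_rtree f s) = f ` labels s"
  by (induction s) auto

lemma height_child_less: "s \<in> set ts \<Longrightarrow> height s < height (Node a ts)"
  by (cases "ts = []") (auto simp: less_Suc_eq_le)

lemma height_Node_attained:
  assumes "ts \<noteq> []"
  obtains s where "s \<in> set ts" "height (Node a ts) = Suc (height s)"
proof -
  have "Max (height ` set ts) \<in> height ` set ts"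
    using assms by (intro Max_in) auto
  then show thesis
    using assms that by (auto simp del: Max_in)
qed

lemma subtree_append: "subtree t (u @ v) = Option.bind (subtree t u) (\<lambda>s. subtree s v)"
  by (induction t u rule: subtree.induct) auto

lemma butlast_in_positions:
  assumes "u \<in> positions t"
  shows "butlast u \<in> positions t"
proof (cases "u = []")
  case False
  then have "subtree t (butlast u @ [last u]) \<noteq> None"
    using assms by (simp add: positions_def)
  then show ?thesis
    by (auto simp: positions_def subtree_append split: Option.bind_splits)
qed (use assms in simp)

lemma positions_Node_subset:
  "positions (Node a ts) \<subseteq> insert [] (\<Union>i<length ts. (#) (Suc i) ` positions (ts ! i))"
proof
  fix v assume v: "v \<in> positions (Node a ts)"
  show "v \<in> insert [] (\<Union>i<length ts. (#) (Suc i) ` positions (ts ! i))"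
  proof (cases v)
    case (Cons j w)
    then have "1 \<le> j" "j \<le> length ts" "w \<in> positions (ts ! (j - 1))"
      using v unfolding positions_def by (auto split: if_splits)
    then show ?thesis
      using Cons by (intro insertI2 UN_I[of "j - 1"]) auto
  qed simp
qed

lemma finite_positions: "finite (positions t)"
proof (induction t)
  case (Node a ts)
  then show ?case
    by (intro finite_subset[OF positions_Node_subset]) auto
qed

lemma card_positions_le_tsize: "card (positions t) \<le> tsize t"
proof (induction t)
  case (Node a ts)
  let ?P = "\<lambda>i. (#) (Suc i) ` positions (ts ! i)"
  have "card (positions (Node a ts)) \<le> card (insert [] (\<Union>i<length ts. ?P i))"
    by (intro card_mono positions_Node_subset) (auto simp: finite_positions)
  also have "\<dots> \<le> Suc (card (\<Union>i<length ts. ?P i))"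
    by (simp add: card_insert_if finite_positions)
  also have "card (\<Union>i<length ts. ?P i) \<le> (\<Sum>i<length ts. card (?P i))"
    by (rule card_UN_le) simp
  also have "\<dots> \<le> (\<Sum>i<length ts. tsize (ts ! i))"
  proof (rule sum_mono)
    fix i assume "i \<in> {..<length ts}"
    then have "ts ! i \<in> set ts" by simp
    then show "card (?P i) \<le> tsize (ts ! i)"
      using Node.IH card_image_le[OF finite_positions, of "(#) (Suc i)" "ts ! i"] by fastforce
  qed
  also have "\<dots> = sum_list (map tsize ts)"
    by (simp add: sum_list_sum_nth atLeast0LessThan)
  finally show ?case by simp
qed

lemma list_all2_in_set2: "list_all2 P xs ys \<Longrightarrow> y \<in> set ys \<Longrightarrow> \<exists>x\<in>set xs. P x y"
  by (metis in_set_conv_nth list_all2_conv_all_nth nth_mem)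

lemma list_all2_right_unique:
  "list_all2 (\<lambda>x y. P x y \<and> (\<forall>y'. P x y' \<longrightarrow> y' = y)) xs ys \<Longrightarrow>
   list_all2 P xs zs \<Longrightarrow> ys = zs"
proof (induction xs ys arbitrary: zs rule: list_all2_induct)
  case (Cons x xs y ys)
  then show ?case by (cases zs) auto
qed simp

inductive_cases evalC_E: "evalC H t C r"
inductive_cases evalT_InrE: "evalT H t (Node (Inr C) []) r"
inductive_cases evalT_InlE: "evalT H t (Node (Inl g) ss) r"

lemma eval_deterministic:
  "evalC H t C r \<Longrightarrow> evalC H t C r' \<Longrightarrow> r' = r"
  "evalT H t s r \<Longrightarrow> evalT H t s r' \<Longrightarrow> r' = r"
proof (induction arbitrary: r' and r' rule: evalC_evalT.inducts)
  case (1 C s r)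
  then show ?case by (metis evalC_E option.inject)
next
  case (2 C r)
  then show ?case by (metis evalT_InrE)
next
  case (3 ss rs g)
  from \<open>evalT H t (Node (Inl g) ss) r'\<close>
  obtain rs' where "r' = Node g rs'" "list_all2 (evalT H t) ss rs'"
    by (rule evalT_InlE)
  with 3 list_all2_right_unique[of "evalT H t" ss rs rs'] show ?case
    by simp
qed

lemma sem_eqI: "evalC H t (init_conf H) r \<Longrightarrow> sem H t = r"
  unfolding sem_def by (blast intro: eval_deterministic(1))

lemma step_SomeE:
  assumes "step H t (u, q, \<mu>) = Some s"
  obtains s0 where "delta H q (lab t u) (\<mu> u) = Some s0"
    and "\<forall>x. Inr x \<in> labels s0 \<longrightarrow> succ_conf t (u, q, \<mu>) x \<noteq> None"
    and "s = map_rtree (map_sum id (\<lambda>x. the (succ_conf t (u, q, \<mu>) x))) s0"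
  using assms unfolding step_def by (auto split: option.splits if_splits)

lemma Inr_in_labels_stepD:
  assumes "step H t C = Some s" "Inr C' \<in> labels s"
  shows "\<exists>x. succ_conf t C x = Some C'"
proof -
  obtain u q \<mu> where C: "C = (u, q, \<mu>)" by (cases C)
  from assms(1) obtain s0 where
    succ: "\<forall>x. Inr x \<in> labels s0 \<longrightarrow> succ_conf t C x \<noteq> None" and
    s: "s = map_rtree (map_sum id (\<lambda>x. the (succ_conf t C x))) s0"
    unfolding C by (rule step_SomeE)
  from assms(2) s obtain y where "y \<in> labels s0" "Inr C' = map_sum id (\<lambda>x. the (succ_conf t C x)) y"
    by auto
  then obtain x where "Inr x \<in> labels s0" "C' = the (succ_conf t C x)"
    by (cases y) auto
  with succ show ?thesis by fastforce
qed

lemma succ_conf_in_positions: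
  assumes "succ_conf t C x = Some C'" "fst C \<in> positions t"
  shows "fst C' \<in> positions t"
  using assms butlast_in_positions
  by (cases "(t, C, x)" rule: succ_conf.cases) (auto split: if_splits)

definition step_path ::
  "('q, 'm, 's, 'g, 'z) hennie_scheme \<Rightarrow> 's rtree \<Rightarrow> ('q, 'm) conf list \<Rightarrow> bool" where
  "step_path H t cs \<longleftrightarrow> (\<forall>i. Suc i < length cs \<longrightarrow>
     (\<exists>s. step H t (cs ! i) = Some s \<and> Inr (cs ! Suc i) \<in> labels s))"

lemma bo_run_iff_step_path:
  "bo_run H t cs \<longleftrightarrow> cs \<noteq> [] \<and> hd cs = init_conf H \<and> step_path H t cs"
  unfolding bo_run_def step_path_def by (auto simp: hd_conv_nth)

lemma step_path_Nil [simp]: "step_path H t []"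
  by (simp add: step_path_def)

lemma step_path_Cons:
  assumes "step_path H t cs" "step H t C = Some s" "cs \<noteq> [] \<longrightarrow> Inr (hd cs) \<in> labels s"
  shows "step_path H t (C # cs)"
  using assms unfolding step_path_def
  by (auto simp: nth_Cons hd_conv_nth split: nat.split)

lemma step_path_in_positions:
  assumes "step_path H t cs" "i < length cs" "fst (hd cs) \<in> positions t"
  shows "fst (cs ! i) \<in> positions t"
  using assms(2)
proof (induction i)
  case 0
  then show ?case using assms(3) by (simp add: hd_conv_nth)
next
  case (Suc i)
  then obtain s where "step H t (cs ! i) = Some s" "Inr (cs ! Suc i) \<in> labels s"
    using assms(1) unfolding step_path_def by blast
  with Suc show ?case
    by (metis Inr_in_labels_stepD Suc_lessD succ_conf_in_positions)
qed

lemma length_le_sum_visits: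
  assumes "finite S" "\<forall>i<length cs. fst (cs ! i) \<in> S"
  shows "length cs \<le> (\<Sum>u\<in>S. visits cs {u})"
proof -
  have "{..<length cs} = (\<Union>u\<in>S. {i. i < length cs \<and> fst (cs ! i) \<in> {u}})"
    using assms(2) by auto
  then have "length cs = card (\<Union>u\<in>S. {i. i < length cs \<and> fst (cs ! i) \<in> {u}})"
    by (metis card_lessThan)
  also have "\<dots> \<le> (\<Sum>u\<in>S. visits cs {u})"
    unfolding visits_def using assms(1) by (rule card_UN_le)
  finally show ?thesis .
qed

lemma THM_bo_run_length_le:
  assumes "THM H"
  shows "\<exists>N. \<forall>t cs. wf_tree (rkS H) (Sig H) t \<and> bo_run H t cs \<longrightarrow> length cs \<le> N * tsize t"
proof -
  obtain N where N: "\<And>t u cs. wf_tree (rkS H) (Sig H) t \<Longrightarrow> u \<in> positions t \<Longrightarrow> bo_run H t cs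
      \<Longrightarrow> visits cs {u} \<le> N"
    using assms unfolding THM_def by blast
  have "length cs \<le> N * tsize t" if wf: "wf_tree (rkS H) (Sig H) t" and run: "bo_run H t cs" for t cs
  proof -
    have "fst (hd cs) \<in> positions t"
      using run by (simp add: bo_run_iff_step_path init_conf_def positions_def)
    then have "\<forall>i<length cs. fst (cs ! i) \<in> positions t"
      using run by (auto simp: bo_run_iff_step_path intro: step_path_in_positions)
    then have "length cs \<le> (\<Sum>u\<in>positions t. visits cs {u})"
      by (rule length_le_sum_visits[OF finite_positions])
    also have "\<dots> \<le> N * card (positions t)"
      using sum_bounded_above[of "positions t" "\<lambda>u. visits cs {u}" N] N[OF wf _ run]
      by (simp add: mult.commute)
    also have "\<dots> \<le> N * tsize t"
      by (simp add: card_positions_le_tsize)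
    finally show ?thesis .
  qed
  then show ?thesis by blast
qed

lemma uTHM_step_height_le:
  assumes "uTHM H"
  shows "\<exists>K. \<forall>t C s. step H t C = Some s \<longrightarrow> height s \<le> K"
proof -
  let ?rhs = "(\<lambda>(q, \<sigma>, m). the (delta H q \<sigma> m)) ` (Qs H \<times> Sig H \<times> Ms H)"
  have fin: "finite ?rhs"
    using assms unfolding uTHM_def by auto
  have "height s \<le> Max (height ` ?rhs)" if "step H t C = Some s" for t C s
  proof -
    obtain u q \<mu> where C: "C = (u, q, \<mu>)" by (cases C)
    from that obtain s0 where d: "delta H q (lab t u) (\<mu> u) = Some s0"
      and s: "s = map_rtree (map_sum id (\<lambda>x. the (succ_conf t C x))) s0"
      unfolding C by (rule step_SomeE)
    have "s0 \<in> ?rhs"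
      using d assms unfolding uTHM_def by (force intro: image_eqI[of _ _ "(q, lab t u, \<mu> u)"])
    then show ?thesis
      using s fin by simp
  qed
  then show ?thesis by blast
qed

(* In the evalT case the path may be empty: then a highest branch of r never leaves s. *)
lemma eval_height_le_step_path:
  assumes K: "\<And>C s. step H t C = Some s \<Longrightarrow> height s \<le> K"
  shows "evalC H t C r \<Longrightarrow>
           \<exists>cs. cs \<noteq> [] \<and> hd cs = C \<and> step_path H t cs \<and> height r \<le> K * length cs"
    and "evalT H t s r \<Longrightarrow>
           \<exists>cs. step_path H t cs \<and> (cs \<noteq> [] \<longrightarrow> Inr (hd cs) \<in> labels s)
             \<and> height r \<le> height s + K * length cs"
proof (induction rule: evalC_evalT.inducts)
  case (1 C s r)
  from "1.IH" obtain cs where cs: "step_path H t cs" "cs \<noteq> [] \<longrightarrow> Inr (hd cs) \<in> labels s"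
    "height r \<le> height s + K * length cs" by blast
  have "step_path H t (C # cs)"
    using cs(1) \<open>step H t C = Some s\<close> cs(2) by (rule step_path_Cons)
  moreover have "height r \<le> K * length (C # cs)"
    using cs(3) K[OF \<open>step H t C = Some s\<close>] by simp
  ultimately show ?case
    by (intro exI[of _ "C # cs"]) simp
next
  case (2 C r)
  then show ?case by auto
next
  case (3 ss rs g)
  show ?case
  proof (cases "rs = []")
    case True
    then show ?thesis by (intro exI[of _ "[]"]) simp
  next
    case False
    then obtain r where r: "r \<in> set rs" "height (Node g rs) = Suc (height r)"
      by (rule height_Node_attained)
    obtain s cs where s: "s \<in> set ss" and cs: "step_path H t cs"
      "cs \<noteq> [] \<longrightarrow> Inr (hd cs) \<in> labels s" "height r \<le> height s + K * length cs"
      using list_all2_in_set2[OF 3 r(1)] by blast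
    have "height s < height (Node (Inl g) ss)"
      using s by (rule height_child_less)
    moreover have "labels s \<subseteq> labels (Node (Inl g) ss)"
      using s by auto
    ultimately show ?thesis
      using r(2) cs by (intro exI[of _ cs]) auto
  qed
qed

lemma height_sem_le_bo_run:
  assumes "in_dom H t" and K: "\<And>C s. step H t C = Some s \<Longrightarrow> height s \<le> K"
  obtains cs where "bo_run H t cs" "height (sem H t) \<le> K * length cs"
proof -
  from \<open>in_dom H t\<close> obtain r where r: "evalC H t (init_conf H) r"
    unfolding in_dom_def by blast
  have "\<exists>cs. cs \<noteq> [] \<and> hd cs = init_conf H \<and> step_path H t cs \<and> height r \<le> K * length cs"
    by (rule eval_height_le_step_path(1)) (fact K, fact r)
  then show thesis
    using that sem_eqI[OF r] by (auto simp: bo_run_iff_step_path)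
qed

theorem mainTheorem1:
  fixes H :: "('q, 'm, 's, 'g) hennie"
  assumes "THM H"
  shows "\<exists>c d :: nat. \<forall>t. wf_tree (rkS H) (Sig H) t \<and> in_dom H t
            \<longrightarrow> height (sem H t) \<le> c * tsize t + d"
proof -
  from THM_bo_run_length_le[OF assms] obtain N where
    N: "\<And>t cs. wf_tree (rkS H) (Sig H) t \<Longrightarrow> bo_run H t cs \<Longrightarrow> length cs \<le> N * tsize t"
    by blast
  from assms have "uTHM H" by (simp add: THM_def)
  with uTHM_step_height_le obtain K where K: "\<And>t C s. step H t C = Some s \<Longrightarrow> height s \<le> K"
    by blast
  have "height (sem H t) \<le> K * N * tsize t"
    if wf: "wf_tree (rkS H) (Sig H) t" and dom: "in_dom H t" for t
  proof -
    obtain cs where run: "bo_run H t cs" and height: "height (sem H t) \<le> K * length cs"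
      using dom K by (rule height_sem_le_bo_run)
    note height
    also have "\<dots> \<le> K * (N * tsize t)"
      using N[OF wf run] by simp
    finally show ?thesis
      by (simp add: mult.assoc)
  qed
  then show ?thesis
    by (intro exI[of _ "K * N"] exI[of _ 0]) simp
qed

end
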